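(* Let $(R_1,d_1)$, $(R_2,d_2)$ be finitely generated fusion algebras and $(R,d)$ their product fusion algebra. Then $\omega(R,d)=\max(\omega(R_1,d_1),\omega(R_2,d_2))$.
   Context: A fusion algebra $(R,d)$ consists of a set $I$ with distinguished $e$ and involution $\alpha\mapsto\bar\alpha$, a unital ring structure on $R=\mathbb{Z}[I]$ with unit $e$ and $\xi\eta=\sum_\alpha N^\alpha_{\xi,\eta}\alpha$, $N^\alpha_{\xi,\eta}\in\mathbb{Z}_{\ge0}$ finitely many nonzero, the involution extending to a $\mathbb{Z}$-linear antimultiplicative involution, Frobenius reciprocity $N^\alpha_{\xi,\eta}=N^\xi_{\alpha,\bar\eta}=N^\eta_{\bar\xi,\alpha}$, and $\mathbb{Z}$-linear multiplicative $d:R\to\mathbb{R}$ with $d(\bar\alpha)=d(\alpha)\ge1$ on $I$. $|A|=\sum_{\alpha\in A}d(\alpha)^2$. A finite generating set is a finite $X\subseteq I$, $\bar X=X$, such that every $\alpha\in I$ has nonzero coefficient in some $x_1\cdots x_n$, $x_i\in X$; finitely generated means such $X$ exists. $\ell_X(e)=0$, otherwise $\ell_X(\alpha)$ is the least such $n\ge1$; $B_X(n)=\{\alpha:\ell_X(\alpha)\le n\}$; $\omega_X=\lim_n|B_X(n)|^{1/n}$ (exists), $\omega=\inf_X\omega_X$ over finite generating sets. The product fusion algebra of $(R_i,d_i)$ with irreducibles $I_i$ is $R=R_1\otimes_{\mathbb{Z}}R_2$ with irreducibles $I=I_1\times I_2$ (elements written $\alpha\boxtimes\beta$), unit $e_1\boxtimes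 e_2$, involution $\overline{\alpha\boxtimes\beta}=\bar\alpha\boxtimes\bar\beta$, structure constants $N^{\alpha\boxtimes\alpha'}_{\xi\boxtimes\xi',\eta\boxtimes\eta'}=N^\alpha_{\xi,\eta}N^{\alpha'}_{\xi',\eta'}$ and dimension $d(\alpha\boxtimes\beta)=d_1(\alpha)d_2(\beta)$. *)

theory Defs
  imports Complex_Main
begin

text \<open>A fusion algebra with set of irreducibles I = UNIV :: 'a set, unit e,
  involution cj, structure constants N \<alpha> \<xi> \<eta> = N^\<alpha>_{\<xi>,\<eta>}, and dimension d.
  The ring R = Z[I] is encoded by its structure constants.\<close>

definition fusion_algebra ::
  "'a \<Rightarrow> ('a \<Rightarrow> 'a) \<Rightarrow> ('a \<Rightarrow> 'a \<Rightarrow> 'a \<Rightarrow> nat) \<Rightarrow> ('a \<Rightarrow> real) \<Rightarrow> bool" where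
  "fusion_algebra e cj N d \<longleftrightarrow>
     (\<forall>\<xi> \<eta>. finite {\<alpha>. N \<alpha> \<xi> \<eta> \<noteq> 0}) \<and>
     (\<forall>\<alpha> \<eta>. N \<alpha> e \<eta> = (if \<alpha> = \<eta> then 1 else 0)) \<and>
     (\<forall>\<alpha> \<xi>. N \<alpha> \<xi> e = (if \<alpha> = \<xi> then 1 else 0)) \<and>
     (\<forall>\<alpha> \<xi> \<eta> \<zeta>. (\<Sum>\<beta>\<in>{\<beta>. N \<beta> \<xi> \<eta> \<noteq> 0}. N \<beta> \<xi> \<eta> * N \<alpha> \<beta> \<zeta>)
                  = (\<Sum>\<beta>\<in>{\<beta>. N \<beta> \<eta> \<zeta> \<noteq> 0}. N \<beta> \<eta> \<zeta> * N \<alpha> \<xi> \<beta>)) \<and>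
     (\<forall>\<alpha>. cj (cj \<alpha>) = \<alpha>) \<and>
     (\<forall>\<alpha> \<xi> \<eta>. N (cj \<alpha>) (cj \<eta>) (cj \<xi>) = N \<alpha> \<xi> \<eta>) \<and>
     (\<forall>\<alpha> \<xi> \<eta>. N \<alpha> \<xi> \<eta> = N \<xi> \<alpha> (cj \<eta>) \<and> N \<alpha> \<xi> \<eta> = N \<eta> (cj \<xi>) \<alpha>) \<and>
     (\<forall>\<xi> \<eta>. d \<xi> * d \<eta> = (\<Sum>\<alpha>\<in>{\<alpha>. N \<alpha> \<xi> \<eta> \<noteq> 0}. real (N \<alpha> \<xi> \<eta>) * d \<alpha>)) \<and>
     (\<forall>\<alpha>. d (cj \<alpha>) = d \<alpha> \<and> d \<alpha> \<ge> 1)"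

text \<open>Left multiplication of an element f of R (coefficient function, finite support)
  by an irreducible x.\<close>
definition fmult :: "('a \<Rightarrow> 'a \<Rightarrow> 'a \<Rightarrow> nat) \<Rightarrow> 'a \<Rightarrow> ('a \<Rightarrow> nat) \<Rightarrow> 'a \<Rightarrow> nat" where
  "fmult N x f = (\<lambda>\<alpha>. \<Sum>\<beta>\<in>{\<beta>. f \<beta> \<noteq> 0}. N \<alpha> x \<beta> * f \<beta>)"

fun word_coef :: "'a \<Rightarrow> ('a \<Rightarrow> 'a \<Rightarrow> 'a \<Rightarrow> nat) \<Rightarrow> 'a list \<Rightarrow> 'a \<Rightarrow> nat" where
  "word_coef e N [] = (\<lambda>\<alpha>. if \<alpha> = e then 1 else 0)"
| "word_coef e N (x # xs) = fmult N x (word_coef e N xs)"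

definition gen_set ::
  "'a \<Rightarrow> ('a \<Rightarrow> 'a) \<Rightarrow> ('a \<Rightarrow> 'a \<Rightarrow> 'a \<Rightarrow> nat) \<Rightarrow> 'a set \<Rightarrow> bool" where
  "gen_set e cj N X \<longleftrightarrow> finite X \<and> cj ` X = X \<and>
     (\<forall>\<alpha>. \<exists>xs. xs \<noteq> [] \<and> set xs \<subseteq> X \<and> word_coef e N xs \<alpha> \<noteq> 0)"

definition finitely_generated ::
  "'a \<Rightarrow> ('a \<Rightarrow> 'a) \<Rightarrow> ('a \<Rightarrow> 'a \<Rightarrow> 'a \<Rightarrow> nat) \<Rightarrow> bool" where
  "finitely_generated e cj N \<longleftrightarrow> (\<exists>X. gen_set e cj N X)"

definition word_length ::
  "'a \<Rightarrow> ('a \<Rightarrow> 'a \<Rightarrow> 'a \<Rightarrow> nat) \<Rightarrow> 'a set \<Rightarrow> 'a \<Rightarrow> nat" where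
  "word_length e N X \<alpha> = (if \<alpha> = e then 0 else
     (LEAST n. n \<ge> 1 \<and> (\<exists>xs. length xs = n \<and> set xs \<subseteq> X \<and> word_coef e N xs \<alpha> \<noteq> 0)))"

definition word_ball ::
  "'a \<Rightarrow> ('a \<Rightarrow> 'a \<Rightarrow> 'a \<Rightarrow> nat) \<Rightarrow> 'a set \<Rightarrow> nat \<Rightarrow> 'a set" where
  "word_ball e N X n = {\<alpha>. word_length e N X \<alpha> \<le> n}"

definition dsize :: "('a \<Rightarrow> real) \<Rightarrow> 'a set \<Rightarrow> real" where
  "dsize d A = (\<Sum>\<alpha>\<in>A. (d \<alpha>)\<^sup>2)"

definition omega_X ::
  "'a \<Rightarrow> ('a \<Rightarrow> 'a \<Rightarrow> 'a \<Rightarrow> nat) \<Rightarrow> ('a \<Rightarrow> real) \<Rightarrow> 'a set \<Rightarrow> real" where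
  "omega_X e N d X = lim (\<lambda>n. dsize d (word_ball e N X n) powr (1 / real n))"

definition omega ::
  "'a \<Rightarrow> ('a \<Rightarrow> 'a) \<Rightarrow> ('a \<Rightarrow> 'a \<Rightarrow> 'a \<Rightarrow> nat) \<Rightarrow> ('a \<Rightarrow> real) \<Rightarrow> real" where
  "omega e cj N d = (INF X \<in> {X. gen_set e cj N X}. omega_X e N d X)"

definition prod_inv :: "('a \<Rightarrow> 'a) \<Rightarrow> ('b \<Rightarrow> 'b) \<Rightarrow> 'a \<times> 'b \<Rightarrow> 'a \<times> 'b" where
  "prod_inv cj1 cj2 = (\<lambda>(a, b). (cj1 a, cj2 b))"

definition prod_N ::
  "('a \<Rightarrow> 'a \<Rightarrow> 'a \<Rightarrow> nat) \<Rightarrow> ('b \<Rightarrow> 'b \<Rightarrow> 'b \<Rightarrow> nat) \<Rightarrow>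
   'a \<times> 'b \<Rightarrow> 'a \<times> 'b \<Rightarrow> 'a \<times> 'b \<Rightarrow> nat" where
  "prod_N N1 N2 = (\<lambda>(\<alpha>, \<alpha>') (\<xi>, \<xi>') (\<eta>, \<eta>'). N1 \<alpha> \<xi> \<eta> * N2 \<alpha>' \<xi>' \<eta>')"

definition prod_d :: "('a \<Rightarrow> real) \<Rightarrow> ('b \<Rightarrow> real) \<Rightarrow> 'a \<times> 'b \<Rightarrow> real" where
  "prod_d d1 d2 = (\<lambda>(a, b). d1 a * d2 b)"

end

theory Submission
  imports Defs "HOL-Real_Asymp.Real_Asymp"
begin

(* Only the supports of products matter.  The ball B_X(m + n) lies in the support of the
   product of B_X(m) and B_X(n), so the estimate |supp(xi eta)| <= d(xi)^2 d(eta)^2 makes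
   |B_X(n)| submultiplicative and omega_X exists by Fekete's lemma.  If X generates the product,
   its projections generate the factors and B_X(n) projects onto their balls, which gives
   omega >= max(omega_1, omega_2).  Conversely, X_1 x {e} union {e} x X_2 generates the product
   and its n-ball lies in the union over k <= n of B_X1(k) x B_X2(n - k); this convolution grows
   at rate at most max(omega_X1, omega_X2). *)

lemma subadditive_le_quotient:
  fixes a :: "nat \<Rightarrow> real"
  assumes sub: "\<And>m n. m \<ge> 1 \<Longrightarrow> n \<ge> 1 \<Longrightarrow> a (m + n) \<le> a m + a n"
    and nonneg: "\<And>n. a n \<ge> 0" and "k \<ge> 1" and "n \<ge> 1"
  shows "a n / n \<le> a k / k + Max (a ` {1..k}) / n"
proof -
  define q where "q = (n - 1) div k"
  define r where "r = (n - 1) mod k + 1"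
  have n_eq: "n = q * k + r" and r: "r \<in> {1..k}"
    using \<open>k \<ge> 1\<close> \<open>n \<ge> 1\<close> by (auto simp: q_def r_def Suc_leI)
  have "a (j * k + r) \<le> real j * a k + a r" for j
  proof (induction j)
    case (Suc j)
    have "a (Suc j * k + r) \<le> a k + a (j * k + r)"
      using sub[of k "j * k + r"] \<open>k \<ge> 1\<close> r by (simp add: add.assoc)
    with Suc show ?case by (simp add: algebra_simps)
  qed simp
  also have "real q * a k = real (q * k) * (a k / k)"
    using \<open>k \<ge> 1\<close> by simp
  also have "\<dots> \<le> real n * (a k / k)"
    using n_eq nonneg[of k] by (intro mult_right_mono) auto
  also have "a r \<le> Max (a ` {1..k})"
    using r by simp
  finally have "a n \<le> real n * (a k / k) + Max (a ` {1..k})"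
    using n_eq by simp
  then show ?thesis
    using \<open>n \<ge> 1\<close> by (simp add: field_simps)
qed

lemma subadditive_quotient_tendsto:
  fixes a :: "nat \<Rightarrow> real"
  assumes sub: "\<And>m n. m \<ge> 1 \<Longrightarrow> n \<ge> 1 \<Longrightarrow> a (m + n) \<le> a m + a n"
    and nonneg: "\<And>n. a n \<ge> 0"
  shows "(\<lambda>n. a n / n) \<longlonglongrightarrow> (INF n\<in>{1..}. a n / n)"
proof (rule LIMSEQ_I)
  let ?L = "INF n\<in>{1..}. a n / n"
  fix \<epsilon> :: real
  assume "\<epsilon> > 0"
  have bdd: "bdd_below ((\<lambda>n. a n / n) ` {1..})"
    using nonneg by (intro bdd_belowI[of _ 0]) auto
  obtain k where k: "k \<ge> 1" "a k / k < ?L + \<epsilon> / 2"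
    using \<open>\<epsilon> > 0\<close> cINF_less_iff[OF _ bdd, of "?L + \<epsilon> / 2"] by auto
  define M where "M = Max (a ` {1..k})"
  obtain n0 :: nat where n0: "M / (\<epsilon> / 2) < n0"
    using reals_Archimedean2 by blast
  have "\<bar>a n / n - ?L\<bar> < \<epsilon>" if "n \<ge> max 1 n0" for n
  proof -
    have "M < n0 * (\<epsilon> / 2)"
      using n0 \<open>\<epsilon> > 0\<close> by (simp add: pos_divide_less_eq)
    also have "\<dots> \<le> n * (\<epsilon> / 2)"
      using that \<open>\<epsilon> > 0\<close> by (intro mult_right_mono) auto
    finally have "M / n < \<epsilon> / 2"
      using that by (simp add: pos_divide_less_eq mult.commute)
    moreover have "a n / n \<le> a k / k + M / n"
      unfolding M_def using subadditive_le_quotient[OF sub nonneg k(1)] that by simp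
    moreover have "?L \<le> a n / n"
      using bdd that by (intro cINF_lower) auto
    ultimately show ?thesis
      using k(2) by linarith
  qed
  then show "\<exists>n0. \<forall>n\<ge>n0. norm (a n / n - ?L) < \<epsilon>"
    by (intro exI[of _ "max 1 n0"]) simp
qed

lemma submultiplicative_root_convergent:
  fixes b :: "nat \<Rightarrow> real"
  assumes ge_1: "\<And>n. b n \<ge> 1"
    and submult: "\<And>m n. m \<ge> 1 \<Longrightarrow> n \<ge> 1 \<Longrightarrow> b (m + n) \<le> b m * b n"
  shows "convergent (\<lambda>n. b n powr (1 / n))"
proof -
  have pos: "b n > 0" for n
    using ge_1[of n] by linarith
  have "(\<lambda>n. ln (b n) / n) \<longlonglongrightarrow> (INF n\<in>{1..}. ln (b n) / n)"
  proof (rule subadditive_quotient_tendsto)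
    show "ln (b (m + n)) \<le> ln (b m) + ln (b n)" if "m \<ge> 1" "n \<ge> 1" for m n
    proof -
      have "ln (b (m + n)) \<le> ln (b m * b n)"
        using submult[OF that] pos by simp
      with pos[of m] pos[of n] show ?thesis
        by (simp add: ln_mult)
    qed
    show "ln (b n) \<ge> 0" for n
      using ge_1[of n] by simp
  qed
  then have "(\<lambda>n. exp (ln (b n) / n)) \<longlonglongrightarrow> exp (INF n\<in>{1..}. ln (b n) / n)"
    by (rule tendsto_exp)
  moreover have "b n powr (1 / n) = exp (ln (b n) / n)" for n
    using pos[of n] by (simp add: powr_def)
  ultimately show ?thesis
    unfolding convergent_def by auto
qed

lemma power_bound_if_root_tendsto:
  fixes b :: "nat \<Rightarrow> real"
  assumes lim: "(\<lambda>n. b n powr (1 / n)) \<longlonglongrightarrow> w" and "w < K" and ge_1: "\<And>n. b n \<ge> 1"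
  shows "\<exists>C>0. \<forall>n. b n \<le> C * K ^ n"
proof -
  have "K > 0"
    using LIMSEQ_le_const[OF lim, of 0] \<open>w < K\<close> by auto
  obtain n0 where n0: "\<And>n. n \<ge> n0 \<Longrightarrow> b n powr (1 / n) < K"
    using order_tendstoD(2)[OF lim \<open>w < K\<close>] by (auto simp: eventually_sequentially)
  define C where "C = 1 + (\<Sum>n\<le>n0. b n / K ^ n)"
  have quotient_nonneg: "b n / K ^ n \<ge> 0" for n
    using ge_1[of n] \<open>K > 0\<close> by simp
  have "C \<ge> 1"
    unfolding C_def using quotient_nonneg by (simp add: sum_nonneg)
  have "b n \<le> C * K ^ n" for n
  proof (cases "n \<le> n0")
    case True
    then have "b n / K ^ n \<le> (\<Sum>j\<le>n0. b j / K ^ j)"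
      using quotient_nonneg by (intro member_le_sum) auto
    then have "b n / K ^ n \<le> C"
      unfolding C_def by linarith
    then show ?thesis
      using \<open>K > 0\<close> by (simp add: pos_divide_le_eq)
  next
    case False
    have "b n = (b n powr (1 / n)) ^ n"
      using False ge_1[of n] by (simp add: powr_realpow [symmetric] powr_powr)
    also have "\<dots> \<le> K ^ n"
      using n0[of n] False by (intro power_mono) auto
    also have "\<dots> \<le> C * K ^ n"
      using \<open>C \<ge> 1\<close> \<open>K > 0\<close> by simp
    finally show ?thesis .
  qed
  with \<open>C \<ge> 1\<close> show ?thesis
    by (intro exI[of _ C]) auto
qed

lemma root_limit_mono:
  fixes a b :: "nat \<Rightarrow> real"
  assumes "(\<lambda>n. a n powr (1 / n)) \<longlonglongrightarrow> x" "(\<lambda>n. b n powr (1 / n)) \<longlonglongrightarrow> y"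
    and "\<And>n. a n \<ge> 1" "\<And>n. a n \<le> b n"
  shows "x \<le> y"
  using assms(3,4)
  by (intro LIMSEQ_le[OF assms(1,2)] exI[of _ 0] allI impI powr_mono2)
    (auto intro: order_trans[OF zero_le_one])

lemma convolution_le_power_bound:
  fixes a b :: "nat \<Rightarrow> real"
  assumes "\<And>n. 0 \<le> a n" "\<And>n. a n \<le> Ca * K ^ n" "\<And>n. 0 \<le> b n" "\<And>n. b n \<le> Cb * K ^ n"
  shows "(\<Sum>k\<le>n. a k * b (n - k)) \<le> ((real n + 1) * (Ca * Cb)) * K ^ n"
proof -
  have "(\<Sum>k\<le>n. a k * b (n - k)) \<le> (\<Sum>k\<le>n. (Ca * K ^ k) * (Cb * K ^ (n - k)))"
    using assms by (intro sum_mono mult_mono) (auto intro: order_trans)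
  also have "\<dots> = (\<Sum>k\<le>n. Ca * Cb * K ^ n)"
    by (intro sum.cong) (simp_all add: algebra_simps flip: power_add)
  finally show ?thesis
    by (simp add: algebra_simps)
qed

lemma root_limit_convolution_le_max:
  fixes a b c :: "nat \<Rightarrow> real"
  assumes lim_a: "(\<lambda>n. a n powr (1 / n)) \<longlonglongrightarrow> x" and a_ge_1: "\<And>n. a n \<ge> 1"
    and lim_b: "(\<lambda>n. b n powr (1 / n)) \<longlonglongrightarrow> y" and b_ge_1: "\<And>n. b n \<ge> 1"
    and lim_c: "(\<lambda>n. c n powr (1 / n)) \<longlonglongrightarrow> z" and c_nonneg: "\<And>n. c n \<ge> 0"
    and conv: "\<And>n. c n \<le> (\<Sum>k\<le>n. a k * b (n - k))"
  shows "z \<le> max x y"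
proof (rule field_le_epsilon)
  fix \<epsilon> :: real
  assume "\<epsilon> > 0"
  define K where "K = max x y + \<epsilon>"
  have "x < K" "y < K"
    unfolding K_def using \<open>\<epsilon> > 0\<close> by auto
  obtain Ca where Ca: "Ca > 0" "\<And>n. a n \<le> Ca * K ^ n"
    using power_bound_if_root_tendsto[OF lim_a \<open>x < K\<close> a_ge_1] by blast
  obtain Cb where Cb: "Cb > 0" "\<And>n. b n \<le> Cb * K ^ n"
    using power_bound_if_root_tendsto[OF lim_b \<open>y < K\<close> b_ge_1] by blast
  have "1 \<le> Ca * K"
    using Ca(2)[of 1] a_ge_1[of 1] by simp
  with \<open>Ca > 0\<close> have "K > 0"
    by (metis zero_less_mult_pos zero_less_one order_less_le_trans)
  have c_le: "c n \<le> ((real n + 1) * (Ca * Cb)) * K ^ n" for n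
    using conv[of n] convolution_le_power_bound[of a Ca K b Cb n] Ca(2) Cb(2) a_ge_1 b_ge_1
    by (meson order_trans zero_le_one)
  have "c n powr (1 / n) \<le> ((real n + 1) * (Ca * Cb)) powr (1 / n) * K" if "n \<ge> 1" for n
  proof -
    have "c n powr (1 / n) \<le> (((real n + 1) * (Ca * Cb)) * K ^ n) powr (1 / n)"
      using c_le[of n] c_nonneg[of n] by (intro powr_mono2) (auto simp: ac_simps)
    also have "\<dots> = ((real n + 1) * (Ca * Cb)) powr (1 / n) * K"
      using that \<open>K > 0\<close> Ca Cb
      by (simp add: powr_mult powr_realpow [symmetric] powr_powr)
    finally show ?thesis .
  qed
  moreover have "(\<lambda>n. ((real n + 1) * (Ca * Cb)) powr (1 / n) * K) \<longlonglongrightarrow> K"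
    using Ca Cb by real_asymp
  ultimately have "z \<le> K"
    by (intro LIMSEQ_le[OF lim_c]) auto
  then show "z \<le> max x y + \<epsilon>"
    unfolding K_def .
qed

lemma INF_eq_max_INF:
  fixes f :: "'a \<Rightarrow> real" and g :: "'b \<Rightarrow> real" and h :: "'c \<Rightarrow> real"
  assumes "A \<noteq> {}" "B \<noteq> {}" and bdd_f: "bdd_below (f ` A)" and bdd_g: "bdd_below (g ` B)"
    and h_ge: "\<And>z. z \<in> C \<Longrightarrow> \<exists>x\<in>A. \<exists>y\<in>B. max (f x) (g y) \<le> h z"
    and h_le: "\<And>x y. x \<in> A \<Longrightarrow> y \<in> B \<Longrightarrow> \<exists>z\<in>C. h z \<le> max (f x) (g y)"
  shows "(INF z\<in>C. h z) = max (INF x\<in>A. f x) (INF y\<in>B. g y)"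
proof (rule antisym)
  have lower: "max (INF x\<in>A. f x) (INF y\<in>B. g y) \<le> h z" if z: "z \<in> C" for z
  proof -
    obtain x y where "x \<in> A" "y \<in> B" "max (f x) (g y) \<le> h z"
      using h_ge[OF z] by blast
    with cINF_lower[OF bdd_f] cINF_lower[OF bdd_g] show ?thesis
      by fastforce
  qed
  have "C \<noteq> {}"
    using h_le \<open>A \<noteq> {}\<close> \<open>B \<noteq> {}\<close> by blast
  then show "max (INF x\<in>A. f x) (INF y\<in>B. g y) \<le> (INF z\<in>C. h z)"
    using lower by (rule cINF_greatest)
  have bdd_h: "bdd_below (h ` C)"
    using lower by (rule bdd_belowI2)
  show "(INF z\<in>C. h z) \<le> max (INF x\<in>A. f x) (INF y\<in>B. g y)"
  proof (rule field_le_epsilon)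
    fix \<epsilon> :: real
    assume "\<epsilon> > 0"
    obtain x where "x \<in> A" "f x < (INF x\<in>A. f x) + \<epsilon>"
      using cINF_less_iff[OF \<open>A \<noteq> {}\<close> bdd_f] \<open>\<epsilon> > 0\<close> by (metis less_add_same_cancel1)
    moreover obtain y where "y \<in> B" "g y < (INF y\<in>B. g y) + \<epsilon>"
      using cINF_less_iff[OF \<open>B \<noteq> {}\<close> bdd_g] \<open>\<epsilon> > 0\<close> by (metis less_add_same_cancel1)
    moreover obtain z where "z \<in> C" "h z \<le> max (f x) (g y)"
      using h_le[OF \<open>x \<in> A\<close> \<open>y \<in> B\<close>] by blast
    moreover have "(INF z\<in>C. h z) \<le> h z"
      using bdd_h \<open>z \<in> C\<close> by (rule cINF_lower)
    ultimately show "(INF z\<in>C. h z) \<le> max (INF x\<in>A. f x) (INF y\<in>B. g y) + \<epsilon>"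
      by linarith
  qed
qed

lemma sum_UN_le:
  fixes f :: "'a \<Rightarrow> real"
  assumes "finite I" "\<And>i. i \<in> I \<Longrightarrow> finite (A i)" "\<And>x. f x \<ge> 0"
  shows "sum f (\<Union>i\<in>I. A i) \<le> (\<Sum>i\<in>I. sum f (A i))"
proof -
  have "(\<Union>i\<in>I. A i) = snd ` Sigma I A"
    by force
  then have "sum f (\<Union>i\<in>I. A i) \<le> sum (f \<circ> snd) (Sigma I A)"
    using assms sum_image_le[of "Sigma I A" f snd] by (simp add: finite_SigmaI)
  also have "\<dots> = (\<Sum>i\<in>I. sum f (A i))"
    using assms by (simp add: sum.Sigma split_def)
  finally show ?thesis .
qed

lemma sum_squares_le_square_sum:
  fixes f :: "'a \<Rightarrow> real"
  assumes "\<And>x. x \<in> A \<Longrightarrow> f x \<ge> 0"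
  shows "(\<Sum>x\<in>A. (f x)\<^sup>2) \<le> (\<Sum>x\<in>A. f x)\<^sup>2"
  using assms
proof (induction A rule: infinite_finite_induct)
  case (insert x A)
  then have "(\<Sum>y\<in>A. (f y)\<^sup>2) \<le> (\<Sum>y\<in>A. f y)\<^sup>2" and "2 * f x * (\<Sum>y\<in>A. f y) \<ge> 0"
    by (auto intro!: mult_nonneg_nonneg sum_nonneg)
  with insert.hyps show ?case
    by (simp add: power2_sum)
qed simp_all

definition supp_mult :: "('a \<Rightarrow> 'a \<Rightarrow> 'a \<Rightarrow> nat) \<Rightarrow> 'a set \<Rightarrow> 'a set \<Rightarrow> 'a set" where
  "supp_mult N A B = {\<gamma>. \<exists>\<alpha>\<in>A. \<exists>\<beta>\<in>B. N \<gamma> \<alpha> \<beta> \<noteq> 0}"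

definition word_supp :: "'a \<Rightarrow> ('a \<Rightarrow> 'a \<Rightarrow> 'a \<Rightarrow> nat) \<Rightarrow> 'a list \<Rightarrow> 'a set" where
  "word_supp e N xs = {\<alpha>. word_coef e N xs \<alpha> \<noteq> 0}"

definition generates :: "'a \<Rightarrow> ('a \<Rightarrow> 'a \<Rightarrow> 'a \<Rightarrow> nat) \<Rightarrow> 'a set \<Rightarrow> bool" where
  "generates e N X \<longleftrightarrow> finite X \<and> (\<forall>\<alpha>. \<exists>xs. xs \<noteq> [] \<and> set xs \<subseteq> X \<and> \<alpha> \<in> word_supp e N xs)"

lemma gen_set_iff_generates: "gen_set e cj N X \<longleftrightarrow> generates e N X \<and> cj ` X = X"
  unfolding gen_set_def generates_def word_supp_def by auto

text \<open>The growth of balls depends only on which structure constants vanish and on the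
  dimension estimate below; these are the properties of a fusion algebra retained here.\<close>
locale fusion_support =
  fixes e :: 'a and N :: "'a \<Rightarrow> 'a \<Rightarrow> 'a \<Rightarrow> nat" and d :: "'a \<Rightarrow> real"
  assumes finite_supp: "finite {\<alpha>. N \<alpha> \<xi> \<eta> \<noteq> 0}"
    and unit_supp: "N \<alpha> e \<eta> \<noteq> 0 \<longleftrightarrow> \<alpha> = \<eta>"
    and assoc_supp: "(\<exists>\<beta>. N \<beta> \<xi> \<eta> \<noteq> 0 \<and> N \<gamma> \<beta> \<zeta> \<noteq> 0) \<longleftrightarrow> (\<exists>\<beta>. N \<beta> \<eta> \<zeta> \<noteq> 0 \<and> N \<gamma> \<xi> \<beta> \<noteq> 0)"
    and supp_nonempty: "\<exists>\<alpha>. N \<alpha> \<xi> \<eta> \<noteq> 0"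
    and dsize_supp_le: "dsize d {\<gamma>. N \<gamma> \<xi> \<eta> \<noteq> 0} \<le> (d \<xi>)\<^sup>2 * (d \<eta>)\<^sup>2"
    and dim_ge_1: "d \<alpha> \<ge> 1"
begin

lemma word_supp_Nil [simp]: "word_supp e N [] = {e}"
  unfolding word_supp_def by auto

lemma word_supp_Cons_if_finite:
  assumes "finite (word_supp e N xs)"
  shows "word_supp e N (x # xs) = supp_mult N {x} (word_supp e N xs)"
  using assms unfolding word_supp_def supp_mult_def by (auto simp: fmult_def)

lemma finite_word_supp [simp]: "finite (word_supp e N xs)"
proof (induction xs)
  case (Cons x xs)
  have "word_supp e N (x # xs) \<subseteq> (\<Union>\<beta>\<in>word_supp e N xs. {\<alpha>. N \<alpha> x \<beta> \<noteq> 0})"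
    unfolding word_supp_Cons_if_finite[OF Cons] supp_mult_def by blast
  with Cons show ?case
    using finite_supp by (meson finite_UN_I finite_subset)
qed simp

lemma word_supp_Cons [simp]: "word_supp e N (x # xs) = supp_mult N {x} (word_supp e N xs)"
  by (simp add: word_supp_Cons_if_finite)

lemma supp_mult_assoc: "supp_mult N (supp_mult N A B) C = supp_mult N A (supp_mult N B C)"
proof -
  have "(\<exists>\<delta>. (\<exists>a\<in>A. \<exists>b\<in>B. N \<delta> a b \<noteq> 0) \<and> (\<exists>c\<in>C. N \<gamma> \<delta> c \<noteq> 0)) \<longleftrightarrow>
        (\<exists>a\<in>A. \<exists>b\<in>B. \<exists>c\<in>C. \<exists>\<delta>. N \<delta> b c \<noteq> 0 \<and> N \<gamma> a \<delta> \<noteq> 0)" for \<gamma>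
    using assoc_supp by blast
  then show ?thesis
    unfolding supp_mult_def by blast
qed

lemma supp_mult_unit_left [simp]: "supp_mult N {e} A = A"
  unfolding supp_mult_def using unit_supp by (auto simp del: neq0_conv)

lemma word_supp_append: "word_supp e N (xs @ ys) = supp_mult N (word_supp e N xs) (word_supp e N ys)"
  by (induction xs) (simp_all add: supp_mult_assoc)

lemma word_supp_remove_unit: "word_supp e N (filter (\<lambda>x. x \<noteq> e) xs) = word_supp e N xs"
  by (induction xs) auto

lemma word_supp_nonempty: "word_supp e N xs \<noteq> {}"
proof (induction xs)
  case (Cons x xs)
  then obtain \<beta> where "\<beta> \<in> word_supp e N xs"
    by blast
  moreover obtain \<alpha> where "N \<alpha> x \<beta> \<noteq> 0"
    using supp_nonempty by blast
  ultimately show ?case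
    unfolding word_supp_Cons supp_mult_def by blast
qed simp

lemma mem_word_ball_iff:
  assumes "generates e N X"
  shows "\<alpha> \<in> word_ball e N X n \<longleftrightarrow> (\<exists>xs. length xs \<le> n \<and> set xs \<subseteq> X \<and> \<alpha> \<in> word_supp e N xs)"
proof (cases "\<alpha> = e")
  case True
  then show ?thesis
    unfolding word_ball_def word_length_def by (auto intro!: exI[of _ "[]"])
next
  case False
  let ?P = "\<lambda>n. n \<ge> 1 \<and> (\<exists>xs. length xs = n \<and> set xs \<subseteq> X \<and> \<alpha> \<in> word_supp e N xs)"
  have length_eq_Least: "word_length e N X \<alpha> = (LEAST n. ?P n)"
    using False unfolding word_length_def word_supp_def by simp
  have P_intro: "?P (length xs)" if "set xs \<subseteq> X" "\<alpha> \<in> word_supp e N xs" for xs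
  proof -
    have "xs \<noteq> []"
      using that False by auto
    with that show ?thesis
      by (intro conjI exI[of _ xs]) (auto simp: Suc_le_eq)
  qed
  obtain xs0 where "set xs0 \<subseteq> X" "\<alpha> \<in> word_supp e N xs0"
    using assms unfolding generates_def by blast
  then have "?P (LEAST n. ?P n)"
    by (intro LeastI[of ?P "length xs0"] P_intro)
  then obtain xs where xs: "length xs = (LEAST n. ?P n)" "set xs \<subseteq> X" "\<alpha> \<in> word_supp e N xs"
    by blast
  show ?thesis
  proof
    assume "\<alpha> \<in> word_ball e N X n"
    with xs length_eq_Least show "\<exists>xs. length xs \<le> n \<and> set xs \<subseteq> X \<and> \<alpha> \<in> word_supp e N xs"
      unfolding word_ball_def by (intro exI[of _ xs]) auto
  next
    assume "\<exists>xs. length xs \<le> n \<and> set xs \<subseteq> X \<and> \<alpha> \<in> word_supp e N xs"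
    then obtain ys where ys: "length ys \<le> n" "set ys \<subseteq> X" "\<alpha> \<in> word_supp e N ys"
      by blast
    with Least_le[of ?P, OF P_intro[OF ys(2,3)]] show "\<alpha> \<in> word_ball e N X n"
      by (simp add: word_ball_def length_eq_Least)
  qed
qed

lemma finite_word_ball:
  assumes "generates e N X"
  shows "finite (word_ball e N X n)"
proof -
  have "word_ball e N X n \<subseteq> (\<Union>xs\<in>{xs. set xs \<subseteq> X \<and> length xs \<le> n}. word_supp e N xs)"
    using mem_word_ball_iff[OF assms] by blast
  moreover have "finite {xs. set xs \<subseteq> X \<and> length xs \<le> n}"
    using assms unfolding generates_def by (intro finite_lists_length_le) auto
  ultimately show ?thesis
    by (meson finite_UN_I finite_word_supp finite_subset)
qed

lemma dsize_word_ball_ge_1: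
  assumes "generates e N X"
  shows "dsize d (word_ball e N X n) \<ge> 1"
proof -
  have "e \<in> word_ball e N X n"
    using mem_word_ball_iff[OF assms] by (auto intro!: exI[of _ "[]"])
  then have "(d e)\<^sup>2 \<le> dsize d (word_ball e N X n)"
    unfolding dsize_def using finite_word_ball[OF assms] by (intro member_le_sum) auto
  moreover have "(d e)\<^sup>2 \<ge> 1"
    using dim_ge_1[of e] by (simp add: one_le_power)
  ultimately show ?thesis
    by linarith
qed

lemma word_ball_add_subset:
  assumes "generates e N X"
  shows "word_ball e N X (m + n) \<subseteq> supp_mult N (word_ball e N X m) (word_ball e N X n)"
proof
  fix \<gamma>
  assume "\<gamma> \<in> word_ball e N X (m + n)"
  then obtain xs where xs: "length xs \<le> m + n" "set xs \<subseteq> X" "\<gamma> \<in> word_supp e N xs"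
    unfolding mem_word_ball_iff[OF assms] by blast
  have "\<gamma> \<in> supp_mult N (word_supp e N (take m xs)) (word_supp e N (drop m xs))"
    using xs(3) by (simp flip: word_supp_append)
  moreover have "length (take m xs) \<le> m" "set (take m xs) \<subseteq> X"
    using xs(2) set_take_subset[of m xs] by auto
  then have "word_supp e N (take m xs) \<subseteq> word_ball e N X m"
    unfolding subset_iff mem_word_ball_iff[OF assms] by blast
  moreover have "length (drop m xs) \<le> n" "set (drop m xs) \<subseteq> X"
    using xs(1,2) set_drop_subset[of m xs] by auto
  then have "word_supp e N (drop m xs) \<subseteq> word_ball e N X n"
    unfolding subset_iff mem_word_ball_iff[OF assms] by blast
  ultimately show "\<gamma> \<in> supp_mult N (word_ball e N X m) (word_ball e N X n)"
    unfolding supp_mult_def by blast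
qed

lemma dsize_word_ball_add_le:
  assumes "generates e N X"
  shows "dsize d (word_ball e N X (m + n)) \<le> dsize d (word_ball e N X m) * dsize d (word_ball e N X n)"
proof -
  let ?B = "word_ball e N X" and ?supp = "\<lambda>(\<xi>, \<eta>). {\<gamma>. N \<gamma> \<xi> \<eta> \<noteq> 0}"
  have finite_balls: "finite (?B m)" "finite (?B n)"
    using finite_word_ball[OF assms] by auto
  have "?B (m + n) \<subseteq> (\<Union>p\<in>?B m \<times> ?B n. ?supp p)"
    using word_ball_add_subset[OF assms] unfolding supp_mult_def by fastforce
  then have "dsize d (?B (m + n)) \<le> dsize d (\<Union>p\<in>?B m \<times> ?B n. ?supp p)"
    unfolding dsize_def using finite_balls finite_supp by (intro sum_mono2) auto
  also have "\<dots> \<le> (\<Sum>p\<in>?B m \<times> ?B n. dsize d (?supp p))"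
    unfolding dsize_def using finite_balls finite_supp by (intro sum_UN_le) auto
  also have "\<dots> \<le> (\<Sum>(\<xi>, \<eta>)\<in>?B m \<times> ?B n. (d \<xi>)\<^sup>2 * (d \<eta>)\<^sup>2)"
    using dsize_supp_le by (intro sum_mono) auto
  also have "\<dots> = dsize d (?B m) * dsize d (?B n)"
    unfolding dsize_def sum_product sum.cartesian_product ..
  finally show ?thesis .
qed

lemma omega_X_tendsto:
  assumes "generates e N X"
  shows "(\<lambda>n. dsize d (word_ball e N X n) powr (1 / n)) \<longlonglongrightarrow> omega_X e N d X"
  unfolding omega_X_def
  using submultiplicative_root_convergent[OF dsize_word_ball_ge_1 dsize_word_ball_add_le, OF assms assms]
  by (simp add: convergent_LIMSEQ_iff)

lemma omega_X_ge_1: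
  assumes "generates e N X"
  shows "omega_X e N d X \<ge> 1"
  using omega_X_tendsto[OF assms]
  by (rule LIMSEQ_le_const) (auto intro!: ge_one_powr_ge_zero dsize_word_ball_ge_1[OF assms])

end

lemma fusion_support_if_fusion_algebra:
  assumes "fusion_algebra e cj N d"
  shows "fusion_support e N d"
proof -
  from assms have fin: "\<And>\<xi> \<eta>. finite {\<alpha>. N \<alpha> \<xi> \<eta> \<noteq> 0}"
    and unit: "\<And>\<alpha> \<eta>. N \<alpha> e \<eta> = (if \<alpha> = \<eta> then 1 else 0)"
    and assoc: "\<And>\<alpha> \<xi> \<eta> \<zeta>. (\<Sum>\<beta>\<in>{\<beta>. N \<beta> \<xi> \<eta> \<noteq> 0}. N \<beta> \<xi> \<eta> * N \<alpha> \<beta> \<zeta>)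
                  = (\<Sum>\<beta>\<in>{\<beta>. N \<beta> \<eta> \<zeta> \<noteq> 0}. N \<beta> \<eta> \<zeta> * N \<alpha> \<xi> \<beta>)"
    and dim: "\<And>\<xi> \<eta>. d \<xi> * d \<eta> = (\<Sum>\<alpha>\<in>{\<alpha>. N \<alpha> \<xi> \<eta> \<noteq> 0}. real (N \<alpha> \<xi> \<eta>) * d \<alpha>)"
    and dim_ge_1: "\<And>\<alpha>. d \<alpha> \<ge> 1"
    unfolding fusion_algebra_def by blast+
  have dim_mult_ge_1: "d \<xi> * d \<eta> \<ge> 1" for \<xi> \<eta>
    using mult_mono[OF dim_ge_1[of \<xi>] dim_ge_1[of \<eta>]] dim_ge_1[of \<xi>] by simp
  show ?thesis
  proof
    show "finite {\<alpha>. N \<alpha> \<xi> \<eta> \<noteq> 0}" for \<xi> \<eta>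
      by (rule fin)
    show "N \<alpha> e \<eta> \<noteq> 0 \<longleftrightarrow> \<alpha> = \<eta>" for \<alpha> \<eta>
      using unit by simp
    show "(\<exists>\<beta>. N \<beta> \<xi> \<eta> \<noteq> 0 \<and> N \<gamma> \<beta> \<zeta> \<noteq> 0) \<longleftrightarrow> (\<exists>\<beta>. N \<beta> \<eta> \<zeta> \<noteq> 0 \<and> N \<gamma> \<xi> \<beta> \<noteq> 0)"
      for \<xi> \<eta> \<gamma> \<zeta>
    proof -
      have sum_nonzero_iff: "(\<Sum>\<beta>\<in>{\<beta>. N \<beta> \<xi>' \<eta>' \<noteq> 0}. N \<beta> \<xi>' \<eta>' * f \<beta>) \<noteq> 0 \<longleftrightarrow>
          (\<exists>\<beta>. N \<beta> \<xi>' \<eta>' \<noteq> 0 \<and> f \<beta> \<noteq> 0)" for \<xi>' \<eta>' and f :: "'a \<Rightarrow> nat"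
        using fin[of \<xi>' \<eta>'] by (subst sum_eq_0_iff) auto
      show ?thesis
        using assoc[of \<xi> \<eta> \<gamma> \<zeta>] unfolding sum_nonzero_iff [symmetric] by simp
    qed
    show "\<exists>\<alpha>. N \<alpha> \<xi> \<eta> \<noteq> 0" for \<xi> \<eta>
    proof (rule ccontr)
      assume "\<nexists>\<alpha>. N \<alpha> \<xi> \<eta> \<noteq> 0"
      then have "{\<alpha>. N \<alpha> \<xi> \<eta> \<noteq> 0} = {}"
        by blast
      with dim[of \<xi> \<eta>] dim_mult_ge_1[of \<xi> \<eta>] show False
        by simp
    qed
    show "dsize d {\<gamma>. N \<gamma> \<xi> \<eta> \<noteq> 0} \<le> (d \<xi>)\<^sup>2 * (d \<eta>)\<^sup>2" for \<xi> \<eta>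
    proof -
      let ?S = "{\<gamma>. N \<gamma> \<xi> \<eta> \<noteq> 0}"
      have d_nonneg: "d \<gamma> \<ge> 0" for \<gamma>
        using dim_ge_1[of \<gamma>] by linarith
      have d_le: "d \<gamma> \<le> real (N \<gamma> \<xi> \<eta>) * d \<gamma>" if "\<gamma> \<in> ?S" for \<gamma>
        using mult_right_mono[of 1 "real (N \<gamma> \<xi> \<eta>)" "d \<gamma>"] that d_nonneg[of \<gamma>] by simp
      have "dsize d ?S \<le> (\<Sum>\<gamma>\<in>?S. d \<gamma>)\<^sup>2"
        unfolding dsize_def using d_nonneg by (rule sum_squares_le_square_sum)
      also have "\<dots> \<le> (\<Sum>\<gamma>\<in>?S. real (N \<gamma> \<xi> \<eta>) * d \<gamma>)\<^sup>2"
        using d_nonneg d_le by (intro power_mono sum_mono sum_nonneg) auto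
      also have "\<dots> = (d \<xi>)\<^sup>2 * (d \<eta>)\<^sup>2"
        by (simp only: dim [symmetric] power_mult_distrib)
      finally show ?thesis .
    qed
  qed (rule dim_ge_1)
qed

lemma fusion_algebra_cj_unit:
  assumes "fusion_algebra e cj N d"
  shows "cj e = e"
proof -
  from assms have "N e e (cj e) = N e e e" and "N \<alpha> e \<eta> = (if \<alpha> = \<eta> then 1 else 0)" for \<alpha> \<eta>
    unfolding fusion_algebra_def by metis+
  then show ?thesis
    by (metis zero_neq_one)
qed

lemma prod_N_apply:
  "prod_N N1 N2 \<gamma> \<xi> \<eta> = N1 (fst \<gamma>) (fst \<xi>) (fst \<eta>) * N2 (snd \<gamma>) (snd \<xi>) (snd \<eta>)"
  by (simp add: prod_N_def case_prod_beta)

lemma prod_N_supp: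
  "{\<gamma>. prod_N N1 N2 \<gamma> \<xi> \<eta> \<noteq> 0} = {\<alpha>. N1 \<alpha> (fst \<xi>) (fst \<eta>) \<noteq> 0} \<times> {\<beta>. N2 \<beta> (snd \<xi>) (snd \<eta>) \<noteq> 0}"
  by (auto simp: prod_N_apply)

lemma dsize_Times: "dsize (prod_d d1 d2) (A \<times> B) = dsize d1 A * dsize d2 B"
  unfolding dsize_def sum_product sum.cartesian_product
  by (simp add: prod_d_def power_mult_distrib case_prod_beta)

lemma fusion_support_prod:
  assumes "fusion_support e1 N1 d1" "fusion_support e2 N2 d2"
  shows "fusion_support (e1, e2) (prod_N N1 N2) (prod_d d1 d2)"
proof -
  interpret A: fusion_support e1 N1 d1 by fact
  interpret B: fusion_support e2 N2 d2 by fact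
  show ?thesis
  proof
    fix \<alpha> \<xi> \<eta> \<gamma> \<zeta> :: "'a \<times> 'b"
    show "finite {\<alpha>. prod_N N1 N2 \<alpha> \<xi> \<eta> \<noteq> 0}"
      unfolding prod_N_supp using A.finite_supp B.finite_supp by blast
    show "prod_N N1 N2 \<alpha> (e1, e2) \<eta> \<noteq> 0 \<longleftrightarrow> \<alpha> = \<eta>"
      using A.unit_supp B.unit_supp by (auto simp: prod_N_apply prod_eq_iff)
    show "(\<exists>\<beta>. prod_N N1 N2 \<beta> \<xi> \<eta> \<noteq> 0 \<and> prod_N N1 N2 \<gamma> \<beta> \<zeta> \<noteq> 0) \<longleftrightarrow>
          (\<exists>\<beta>. prod_N N1 N2 \<beta> \<eta> \<zeta> \<noteq> 0 \<and> prod_N N1 N2 \<gamma> \<xi> \<beta> \<noteq> 0)"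
      using A.assoc_supp[of "fst \<xi>" "fst \<eta>" "fst \<gamma>" "fst \<zeta>"] B.assoc_supp[of "snd \<xi>" "snd \<eta>" "snd \<gamma>" "snd \<zeta>"]
      by (simp add: prod_N_apply) blast
    show "\<exists>\<alpha>. prod_N N1 N2 \<alpha> \<xi> \<eta> \<noteq> 0"
      using A.supp_nonempty[of "fst \<xi>" "fst \<eta>"] B.supp_nonempty[of "snd \<xi>" "snd \<eta>"]
      by (auto simp: prod_N_apply)
    show "dsize (prod_d d1 d2) {\<gamma>. prod_N N1 N2 \<gamma> \<xi> \<eta> \<noteq> 0} \<le> (prod_d d1 d2 \<xi>)\<^sup>2 * (prod_d d1 d2 \<eta>)\<^sup>2"
    proof -
      have "dsize d1 {\<alpha>. N1 \<alpha> (fst \<xi>) (fst \<eta>) \<noteq> 0} * dsize d2 {\<beta>. N2 \<beta> (snd \<xi>) (snd \<eta>) \<noteq> 0}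
          \<le> ((d1 (fst \<xi>))\<^sup>2 * (d1 (fst \<eta>))\<^sup>2) * ((d2 (snd \<xi>))\<^sup>2 * (d2 (snd \<eta>))\<^sup>2)"
        by (intro mult_mono A.dsize_supp_le B.dsize_supp_le) (auto simp: dsize_def intro: sum_nonneg)
      then show ?thesis
        unfolding prod_N_supp dsize_Times by (simp add: prod_d_def case_prod_beta power_mult_distrib mult_ac)
    qed
    show "prod_d d1 d2 \<alpha> \<ge> 1"
      using mult_mono[OF A.dim_ge_1[of "fst \<alpha>"] B.dim_ge_1[of "snd \<alpha>"]] A.dim_ge_1[of "fst \<alpha>"]
      by (simp add: prod_d_def case_prod_beta)
  qed
qed

lemma dsize_fst_image_le:
  assumes "finite B" "\<And>b. d2 b \<ge> 1"
  shows "dsize d1 (fst ` B) \<le> dsize (prod_d d1 d2) B"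
proof -
  have "dsize d1 (fst ` B) \<le> (\<Sum>p\<in>B. (d1 (fst p))\<^sup>2)"
    unfolding dsize_def using assms(1) sum_image_le[of B "\<lambda>a. (d1 a)\<^sup>2" fst] by (simp add: o_def)
  also have "\<dots> \<le> dsize (prod_d d1 d2) B"
  proof -
    have "(d1 a)\<^sup>2 \<le> (d1 a)\<^sup>2 * (d2 b)\<^sup>2" for a b
      using mult_left_mono[of 1 "(d2 b)\<^sup>2" "(d1 a)\<^sup>2"] one_le_power[OF assms(2)] by simp
    then show ?thesis
      unfolding dsize_def by (intro sum_mono) (simp add: prod_d_def case_prod_beta power_mult_distrib)
  qed
  finally show ?thesis .
qed

lemma dsize_snd_image_le:
  assumes "finite B" "\<And>a. d1 a \<ge> 1"
  shows "dsize d2 (snd ` B) \<le> dsize (prod_d d1 d2) B"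
proof -
  have "dsize d2 (snd ` B) \<le> (\<Sum>p\<in>B. (d2 (snd p))\<^sup>2)"
    unfolding dsize_def using assms(1) sum_image_le[of B "\<lambda>b. (d2 b)\<^sup>2" snd] by (simp add: o_def)
  also have "\<dots> \<le> dsize (prod_d d1 d2) B"
  proof -
    have "(d2 b)\<^sup>2 \<le> (d1 a)\<^sup>2 * (d2 b)\<^sup>2" for a b
      using mult_right_mono[of 1 "(d1 a)\<^sup>2" "(d2 b)\<^sup>2"] one_le_power[OF assms(2)] by simp
    then show ?thesis
      unfolding dsize_def by (intro sum_mono) (simp add: prod_d_def case_prod_beta power_mult_distrib)
  qed
  finally show ?thesis .
qed

locale fusion_support_pair = A: fusion_support e1 N1 d1 + B: fusion_support e2 N2 d2
  for e1 :: 'a and N1 d1 and e2 :: 'b and N2 d2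
begin

sublocale P: fusion_support "(e1, e2)" "prod_N N1 N2" "prod_d d1 d2"
  using fusion_support_prod[OF A.fusion_support_axioms B.fusion_support_axioms] .

lemma word_supp_prod:
  "word_supp (e1, e2) (prod_N N1 N2) zs = word_supp e1 N1 (map fst zs) \<times> word_supp e2 N2 (map snd zs)"
proof (induction zs)
  case (Cons z zs)
  have "supp_mult (prod_N N1 N2) {z} (A \<times> B) = supp_mult N1 {fst z} A \<times> supp_mult N2 {snd z} B" for A B
    by (auto simp: supp_mult_def prod_N_apply)
  with Cons show ?case
    by simp
qed simp

lemma generates_projections:
  assumes "generates (e1, e2) (prod_N N1 N2) X"
  shows "generates e1 N1 (fst ` X)" and "generates e2 N2 (snd ` X)"
proof -
  have "finite X"
    using assms unfolding generates_def by blast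
  have "\<exists>zs. zs \<noteq> [] \<and> set zs \<subseteq> X \<and> \<alpha> \<in> word_supp e1 N1 (map fst zs) \<and> \<beta> \<in> word_supp e2 N2 (map snd zs)"
    for \<alpha> \<beta>
    using assms unfolding generates_def word_supp_prod by blast
  then show "generates e1 N1 (fst ` X)" and "generates e2 N2 (snd ` X)"
    unfolding generates_def using \<open>finite X\<close> by (metis Nil_is_map_conv finite_imageI list.set_map image_mono)+
qed

lemma word_ball_projections:
  assumes X: "generates (e1, e2) (prod_N N1 N2) X"
  shows "word_ball e1 N1 (fst ` X) n \<subseteq> fst ` word_ball (e1, e2) (prod_N N1 N2) X n"
    and "word_ball e2 N2 (snd ` X) n \<subseteq> snd ` word_ball (e1, e2) (prod_N N1 N2) X n"
proof -
  have lift: "\<exists>zs. map f zs = ws \<and> set zs \<subseteq> X" if "set ws \<subseteq> f ` X" for f :: "'a \<times> 'b \<Rightarrow> 'c" and ws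
  proof -
    from that have "ws \<in> map f ` lists X"
      unfolding lists_image [symmetric] by auto
    then show ?thesis
      by auto
  qed
  have mem_ball: "(\<alpha>, \<beta>) \<in> word_ball (e1, e2) (prod_N N1 N2) X n"
    if "length zs \<le> n" "set zs \<subseteq> X" "\<alpha> \<in> word_supp e1 N1 (map fst zs)" "\<beta> \<in> word_supp e2 N2 (map snd zs)"
    for zs \<alpha> \<beta>
    using that unfolding P.mem_word_ball_iff[OF X] word_supp_prod by blast
  show "word_ball e1 N1 (fst ` X) n \<subseteq> fst ` word_ball (e1, e2) (prod_N N1 N2) X n"
  proof
    fix \<alpha>
    assume "\<alpha> \<in> word_ball e1 N1 (fst ` X) n"
    then obtain zs where "length zs \<le> n" "set zs \<subseteq> X" "\<alpha> \<in> word_supp e1 N1 (map fst zs)"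
      unfolding A.mem_word_ball_iff[OF generates_projections(1)[OF X]] using lift by force
    moreover obtain \<beta> where "\<beta> \<in> word_supp e2 N2 (map snd zs)"
      using B.word_supp_nonempty by blast
    ultimately show "\<alpha> \<in> fst ` word_ball (e1, e2) (prod_N N1 N2) X n"
      using mem_ball by force
  qed
  show "word_ball e2 N2 (snd ` X) n \<subseteq> snd ` word_ball (e1, e2) (prod_N N1 N2) X n"
  proof
    fix \<beta>
    assume "\<beta> \<in> word_ball e2 N2 (snd ` X) n"
    then obtain zs where "length zs \<le> n" "set zs \<subseteq> X" "\<beta> \<in> word_supp e2 N2 (map snd zs)"
      unfolding B.mem_word_ball_iff[OF generates_projections(2)[OF X]] using lift by force
    moreover obtain \<alpha> where "\<alpha> \<in> word_supp e1 N1 (map fst zs)"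
      using A.word_supp_nonempty by blast
    ultimately show "\<beta> \<in> snd ` word_ball (e1, e2) (prod_N N1 N2) X n"
      using mem_ball by force
  qed
qed

lemma dsize_word_ball_projections_le:
  assumes X: "generates (e1, e2) (prod_N N1 N2) X"
  shows "dsize d1 (word_ball e1 N1 (fst ` X) n) \<le> dsize (prod_d d1 d2) (word_ball (e1, e2) (prod_N N1 N2) X n)"
    and "dsize d2 (word_ball e2 N2 (snd ` X) n) \<le> dsize (prod_d d1 d2) (word_ball (e1, e2) (prod_N N1 N2) X n)"
proof -
  let ?B = "word_ball (e1, e2) (prod_N N1 N2) X n"
  have "dsize d1 (word_ball e1 N1 (fst ` X) n) \<le> dsize d1 (fst ` ?B)"
    unfolding dsize_def using word_ball_projections(1)[OF X] P.finite_word_ball[OF X]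
    by (intro sum_mono2) auto
  also have "\<dots> \<le> dsize (prod_d d1 d2) ?B"
    using P.finite_word_ball[OF X] B.dim_ge_1 by (rule dsize_fst_image_le)
  finally show "dsize d1 (word_ball e1 N1 (fst ` X) n) \<le> dsize (prod_d d1 d2) ?B" .
  have "dsize d2 (word_ball e2 N2 (snd ` X) n) \<le> dsize d2 (snd ` ?B)"
    unfolding dsize_def using word_ball_projections(2)[OF X] P.finite_word_ball[OF X]
    by (intro sum_mono2) auto
  also have "\<dots> \<le> dsize (prod_d d1 d2) ?B"
    using P.finite_word_ball[OF X] A.dim_ge_1 by (rule dsize_snd_image_le)
  finally show "dsize d2 (word_ball e2 N2 (snd ` X) n) \<le> dsize (prod_d d1 d2) ?B" .
qed

lemma omega_X_projections_le:
  assumes X: "generates (e1, e2) (prod_N N1 N2) X"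
  shows "max (omega_X e1 N1 d1 (fst ` X)) (omega_X e2 N2 d2 (snd ` X)) \<le> omega_X (e1, e2) (prod_N N1 N2) (prod_d d1 d2) X"
  using root_limit_mono[OF A.omega_X_tendsto P.omega_X_tendsto[OF X] A.dsize_word_ball_ge_1
      dsize_word_ball_projections_le(1)[OF X]]
    root_limit_mono[OF B.omega_X_tendsto P.omega_X_tendsto[OF X] B.dsize_word_ball_ge_1
      dsize_word_ball_projections_le(2)[OF X]]
    generates_projections[OF X]
  by simp

lemma generates_axes:
  assumes X1: "generates e1 N1 X1" and X2: "generates e2 N2 X2"
  shows "generates (e1, e2) (prod_N N1 N2) (X1 \<times> {e2} \<union> {e1} \<times> X2)"
  unfolding generates_def
proof (intro conjI allI)
  show "finite (X1 \<times> {e2} \<union> {e1} \<times> X2)"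
    using X1 X2 unfolding generates_def by blast
  fix p :: "'a \<times> 'b"
  obtain xs where xs: "xs \<noteq> []" "set xs \<subseteq> X1" "fst p \<in> word_supp e1 N1 xs"
    using X1 unfolding generates_def by blast
  obtain ys where ys: "set ys \<subseteq> X2" "snd p \<in> word_supp e2 N2 ys"
    using X2 unfolding generates_def by blast
  define zs where "zs = map (\<lambda>x. (x, e2)) xs @ map (\<lambda>y. (e1, y)) ys"
  have "word_supp e1 N1 (map fst zs) = word_supp e1 N1 xs"
    by (subst (1 2) A.word_supp_remove_unit [symmetric]) (simp add: zs_def comp_def)
  moreover have "word_supp e2 N2 (map snd zs) = word_supp e2 N2 ys"
    by (subst (1 2) B.word_supp_remove_unit [symmetric]) (simp add: zs_def comp_def)
  ultimately have "p \<in> word_supp (e1, e2) (prod_N N1 N2) zs"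
    using xs(3) ys(2) by (simp add: word_supp_prod mem_Times_iff)
  moreover have "zs \<noteq> []" "set zs \<subseteq> X1 \<times> {e2} \<union> {e1} \<times> X2"
    using xs ys unfolding zs_def by auto
  ultimately show "\<exists>zs. zs \<noteq> [] \<and> set zs \<subseteq> X1 \<times> {e2} \<union> {e1} \<times> X2 \<and> p \<in> word_supp (e1, e2) (prod_N N1 N2) zs"
    by blast
qed

lemma word_ball_axes_subset:
  assumes X1: "generates e1 N1 X1" and X2: "generates e2 N2 X2"
  shows "word_ball (e1, e2) (prod_N N1 N2) (X1 \<times> {e2} \<union> {e1} \<times> X2) n
         \<subseteq> (\<Union>k\<le>n. word_ball e1 N1 X1 k \<times> word_ball e2 N2 X2 (n - k))"
proof
  fix p
  assume "p \<in> word_ball (e1, e2) (prod_N N1 N2) (X1 \<times> {e2} \<union> {e1} \<times> X2) n"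
  then obtain zs where zs: "length zs \<le> n" "set zs \<subseteq> X1 \<times> {e2} \<union> {e1} \<times> X2"
    "p \<in> word_supp (e1, e2) (prod_N N1 N2) zs"
    unfolding P.mem_word_ball_iff[OF generates_axes[OF X1 X2]] by blast
  define xs where "xs = filter (\<lambda>x. x \<noteq> e1) (map fst zs)"
  define ys where "ys = filter (\<lambda>y. y \<noteq> e2) (map snd zs)"
  have len: "length xs + length ys \<le> length zs"
    using zs(2) unfolding xs_def ys_def by (induction zs) auto
  have "set xs \<subseteq> X1" "fst p \<in> word_supp e1 N1 xs"
    using zs(2,3) unfolding xs_def A.word_supp_remove_unit by (auto simp: word_supp_prod)
  then have "fst p \<in> word_ball e1 N1 X1 (length xs)"
    unfolding A.mem_word_ball_iff[OF X1] by blast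
  moreover have "set ys \<subseteq> X2" "snd p \<in> word_supp e2 N2 ys"
    using zs(2,3) unfolding ys_def B.word_supp_remove_unit by (auto simp: word_supp_prod)
  then have "snd p \<in> word_ball e2 N2 X2 (n - length xs)"
    unfolding B.mem_word_ball_iff[OF X2] using len zs(1) by (intro exI[of _ ys]) auto
  moreover have "length xs \<le> n"
    using len zs(1) by simp
  ultimately show "p \<in> (\<Union>k\<le>n. word_ball e1 N1 X1 k \<times> word_ball e2 N2 X2 (n - k))"
    by (auto simp: mem_Times_iff)
qed

lemma omega_X_axes_le:
  assumes X1: "generates e1 N1 X1" and X2: "generates e2 N2 X2"
  shows "omega_X (e1, e2) (prod_N N1 N2) (prod_d d1 d2) (X1 \<times> {e2} \<union> {e1} \<times> X2)
         \<le> max (omega_X e1 N1 d1 X1) (omega_X e2 N2 d2 X2)"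
proof (rule root_limit_convolution_le_max)
  let ?X = "X1 \<times> {e2} \<union> {e1} \<times> X2" and ?B1 = "word_ball e1 N1 X1" and ?B2 = "word_ball e2 N2 X2"
  show "dsize (prod_d d1 d2) (word_ball (e1, e2) (prod_N N1 N2) ?X n) \<le> (\<Sum>k\<le>n. dsize d1 (?B1 k) * dsize d2 (?B2 (n - k)))"
    for n
  proof -
    have finite_boxes: "finite (?B1 k \<times> ?B2 (n - k))" for k
      using A.finite_word_ball[OF X1] B.finite_word_ball[OF X2] by blast
    have "dsize (prod_d d1 d2) (word_ball (e1, e2) (prod_N N1 N2) ?X n)
        \<le> dsize (prod_d d1 d2) (\<Union>k\<le>n. ?B1 k \<times> ?B2 (n - k))"
      unfolding dsize_def using word_ball_axes_subset[OF X1 X2] finite_boxes by (intro sum_mono2) auto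
    also have "\<dots> \<le> (\<Sum>k\<le>n. dsize (prod_d d1 d2) (?B1 k \<times> ?B2 (n - k)))"
      unfolding dsize_def using finite_boxes by (intro sum_UN_le) auto
    finally show ?thesis
      by (simp add: dsize_Times)
  qed
qed (use A.omega_X_tendsto[OF X1] B.omega_X_tendsto[OF X2] P.omega_X_tendsto[OF generates_axes[OF X1 X2]]
       A.dsize_word_ball_ge_1[OF X1] B.dsize_word_ball_ge_1[OF X2] in \<open>auto simp: dsize_def intro: sum_nonneg\<close>)

lemma gen_set_projections:
  assumes "gen_set (e1, e2) (prod_inv cj1 cj2) (prod_N N1 N2) X"
  shows "gen_set e1 cj1 N1 (fst ` X)" and "gen_set e2 cj2 N2 (snd ` X)"
proof -
  have X: "generates (e1, e2) (prod_N N1 N2) X" and "prod_inv cj1 cj2 ` X = X"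
    using assms unfolding gen_set_iff_generates by auto
  moreover have "fst ` prod_inv cj1 cj2 ` X = cj1 ` fst ` X" and "snd ` prod_inv cj1 cj2 ` X = cj2 ` snd ` X"
    unfolding prod_inv_def by force+
  ultimately show "gen_set e1 cj1 N1 (fst ` X)" and "gen_set e2 cj2 N2 (snd ` X)"
    unfolding gen_set_iff_generates using generates_projections[OF X] by simp_all
qed

lemma gen_set_axes:
  assumes "gen_set e1 cj1 N1 X1" "gen_set e2 cj2 N2 X2" "cj1 e1 = e1" "cj2 e2 = e2"
  shows "gen_set (e1, e2) (prod_inv cj1 cj2) (prod_N N1 N2) (X1 \<times> {e2} \<union> {e1} \<times> X2)"
proof -
  have "prod_inv cj1 cj2 ` (X1 \<times> {e2} \<union> {e1} \<times> X2) = cj1 ` X1 \<times> {cj2 e2} \<union> {cj1 e1} \<times> cj2 ` X2"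
    unfolding prod_inv_def by force
  with assms show ?thesis
    unfolding gen_set_iff_generates by (simp add: generates_axes)
qed

end

theorem proposition3p13:
  fixes e1 :: 'a and cj1 :: "'a \<Rightarrow> 'a" and N1 :: "'a \<Rightarrow> 'a \<Rightarrow> 'a \<Rightarrow> nat" and d1 :: "'a \<Rightarrow> real"
    and e2 :: 'b and cj2 :: "'b \<Rightarrow> 'b" and N2 :: "'b \<Rightarrow> 'b \<Rightarrow> 'b \<Rightarrow> nat" and d2 :: "'b \<Rightarrow> real"
  assumes "fusion_algebra e1 cj1 N1 d1" and "finitely_generated e1 cj1 N1"
      and "fusion_algebra e2 cj2 N2 d2" and "finitely_generated e2 cj2 N2"
  shows "omega (e1, e2) (prod_inv cj1 cj2) (prod_N N1 N2) (prod_d d1 d2)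
         = max (omega e1 cj1 N1 d1) (omega e2 cj2 N2 d2)"
proof -
  interpret fusion_support_pair e1 N1 d1 e2 N2 d2
    using assms(1,3) by (simp add: fusion_support_pair_def fusion_support_if_fusion_algebra)
  have "cj1 e1 = e1" "cj2 e2 = e2"
    using assms(1,3) by (simp_all add: fusion_algebra_cj_unit)
  let ?S1 = "{X. gen_set e1 cj1 N1 X}" and ?S2 = "{X. gen_set e2 cj2 N2 X}"
    and ?S = "{X. gen_set (e1, e2) (prod_inv cj1 cj2) (prod_N N1 N2) X}"
    and ?\<omega>1 = "omega_X e1 N1 d1" and ?\<omega>2 = "omega_X e2 N2 d2"
    and ?\<omega> = "omega_X (e1, e2) (prod_N N1 N2) (prod_d d1 d2)"
  have "?S1 \<noteq> {}" "?S2 \<noteq> {}"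
    using assms(2,4) unfolding finitely_generated_def by auto
  moreover have "bdd_below (?\<omega>1 ` ?S1)" "bdd_below (?\<omega>2 ` ?S2)"
    using A.omega_X_ge_1 B.omega_X_ge_1 by (auto simp: gen_set_iff_generates intro!: bdd_belowI[of _ 1])
  moreover have "\<exists>X1\<in>?S1. \<exists>X2\<in>?S2. max (?\<omega>1 X1) (?\<omega>2 X2) \<le> ?\<omega> X" if "X \<in> ?S" for X
    using that gen_set_projections[of cj1 cj2 X] omega_X_projections_le[of X]
    by (intro bexI[of _ "fst ` X"] bexI[of _ "snd ` X"]) (simp_all add: gen_set_iff_generates)
  moreover have "\<exists>X\<in>?S. ?\<omega> X \<le> max (?\<omega>1 X1) (?\<omega>2 X2)" if "X1 \<in> ?S1" "X2 \<in> ?S2" for X1 X2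
    using that gen_set_axes[of cj1 X1 cj2 X2] omega_X_axes_le[of X1 X2] \<open>cj1 e1 = e1\<close> \<open>cj2 e2 = e2\<close>
    by (intro bexI[of _ "X1 \<times> {e2} \<union> {e1} \<times> X2"]) (simp_all add: gen_set_iff_generates)
  ultimately show ?thesis
    unfolding omega_def by (rule INF_eq_max_INF)
qed

end
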